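(* Let $K>1$ and let $1\le k\le n$ be integers. Let $X_1,\ldots,X_n$ be independent non-negative random variables with cumulative distribution functions $F_1,\ldots,F_n$, each satisfying condition (C) below with parameter $K$. Set $F=\frac1n\sum_{i=1}^n F_i$ and let $q=q_F\big(\frac{k-1/2}{n}\big)$ be any quantile of order $\frac{k-1/2}{n}$ of $F$. Then for every $0<t<K^{-5}$, $$\mathbb P\Big\{\operatorname{k\text{-}min}_{1\le i\le n}X_i< t\,q\Big\}\le 4\,t^{1/(4\ln K)},$$ and for every $t>K^5$, $$\mathbb P\Big\{\operatorname{k\text{-}min}_{1\le i\le n}X_i> t\,q\Big\}\le 4\,t^{-1/(6\ln K)}.$$ In particular, every median $M$ of $\operatorname{k\text{-}min}_{1\le i\le n}X_i$ satisfies $$K^{-10}\,q\le M\le K^{13}\,q.$$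
   Context: For real numbers $a_1,\ldots,a_n$ and $1\le k\le n$, $\operatorname{k\text{-}min}_{i\le n}a_i$ denotes the $k$-th smallest element of the sequence (counted with multiplicity). Condition (C) with parameter $K>1$ for the cdf $F$ of a non-negative random variable: $\frac{F(Kt)}{1-F(Kt)}\ge \frac{2F(t)}{1-F(t)}$ for all $t>0$, with the conventions $1/0=\infty$, $1/\infty=0$. For a cdf $G$ (of a random variable $\xi$) and $r\in[0,1]$, a quantile of order $r$ is any number $q_G(r)$ with $\mathbb P\{\xi<q_G(r)\}\le r$ and $\mathbb P\{\xi\le q_G(r)\}\ge r$ (not necessarily unique); for $F=\frac1n\sum F_i$ this means $F(s)\le r$ for all $s<q_F(r)$ and $F(q_F(r))\ge r$. *)

theory Defs
  imports "HOL-Probability.Probability"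
begin

definition kmin :: "nat \<Rightarrow> nat \<Rightarrow> (nat \<Rightarrow> real) \<Rightarrow> real" where
  "kmin n k a = sort (map a [0..<n]) ! (k - 1)"

definition odds :: "real \<Rightarrow> ereal" where
  "odds p = (if p = 1 then \<infinity> else ereal (p / (1 - p)))"

definition condC :: "real \<Rightarrow> (real \<Rightarrow> real) \<Rightarrow> bool" where
  "condC K F \<longleftrightarrow> (\<forall>t>0. odds (F (K * t)) \<ge> 2 * odds (F t))"

definition is_quantile :: "(real \<Rightarrow> real) \<Rightarrow> real \<Rightarrow> real \<Rightarrow> bool" where
  "is_quantile G r q \<longleftrightarrow> (\<forall>s<q. G s \<le> r) \<and> G q \<ge> r"

definition is_median :: "'a measure \<Rightarrow> ('a \<Rightarrow> real) \<Rightarrow> real \<Rightarrow> bool" where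
  "is_median P Y m \<longleftrightarrow> measure P {\<omega>\<in>space P. Y \<omega> < m} \<le> 1/2 \<and>
                        measure P {\<omega>\<in>space P. Y \<omega> \<le> m} \<ge> 1/2"

end

theory Submission
  imports Defs
begin

text \<open>
  Writing \<open>F\<^sub>i\<close> for the cdf of \<open>X\<^sub>i\<close>, the event \<open>k-min X\<^sub>i \<le> s\<close> says that at least \<open>k\<close> of
  the independent events \<open>X\<^sub>i \<le> s\<close> occur, so its probability is a Poisson-binomial tail
  in the success probabilities \<open>F\<^sub>i(s)\<close>. Iterating condition (C) \<open>j\<close> times multiplies the odds
  of \<open>F\<^sub>i\<close> by \<open>2\<^sup>j\<close> between \<open>s\<close> and \<open>K\<^sup>j s\<close>. If \<open>K\<^sup>j s < q\<close>, the expected number of successes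
  at the point \<open>K\<^sup>j s\<close> is at most \<open>k - 1/2\<close>, and an induction over the trials together with
  convexity of \<open>exp\<close> shows that \<open>k\<close> successes at \<open>s\<close> then have probability at most \<open>2\<^sup>-\<^sup>j\<^sup>/\<^sup>2\<close>. Choosing \<open>j \<approx> log\<^sub>K (1/t)\<close>
  gives the lower tail; the upper tail is the same argument applied to the events \<open>X\<^sub>i > s\<close>.
  The median bounds follow by evaluating the tails at \<open>t = K\<^sup>-\<^sup>1\<^sup>0\<close> and \<open>t = K\<^sup>1\<^sup>3\<close>.
\<close>

section \<open>Poisson-binomial tails\<close>

definition poisson_binomial_tail :: "nat set \<Rightarrow> nat \<Rightarrow> (nat \<Rightarrow> real) \<Rightarrow> real" where
  "poisson_binomial_tail I k p =
     (\<Sum>S\<in>{S. S \<subseteq> I \<and> k \<le> card S}. (\<Prod>i\<in>S. p i) * (\<Prod>i\<in>I - S. 1 - p i))"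

lemma poisson_binomial_tail_cong:
  "(\<And>i. i \<in> I \<Longrightarrow> p i = p' i) \<Longrightarrow> poisson_binomial_tail I k p = poisson_binomial_tail I k p'"
  unfolding poisson_binomial_tail_def by (intro sum.cong refl arg_cong2[where f = "(*)"] prod.cong) auto

lemma poisson_binomial_tail_nonneg:
  "finite I \<Longrightarrow> (\<And>i. i \<in> I \<Longrightarrow> 0 \<le> p i \<and> p i \<le> 1) \<Longrightarrow> 0 \<le> poisson_binomial_tail I k p"
  unfolding poisson_binomial_tail_def by (intro sum_nonneg mult_nonneg_nonneg prod_nonneg) auto

lemma poisson_binomial_tail_antimono:
  "finite I \<Longrightarrow> (\<And>i. i \<in> I \<Longrightarrow> 0 \<le> p i \<and> p i \<le> 1) \<Longrightarrow> k' \<le> k \<Longrightarrow>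
     poisson_binomial_tail I k p \<le> poisson_binomial_tail I k' p"
  unfolding poisson_binomial_tail_def
  by (intro sum_mono2 mult_nonneg_nonneg prod_nonneg) (auto simp: finite_subset)

lemma poisson_binomial_tail_empty: "poisson_binomial_tail {} k p = (if k = 0 then 1 else 0)"
proof -
  have "{S. S \<subseteq> {} \<and> k \<le> card S} = (if k = 0 then {{}} else {})" by auto
  then show ?thesis unfolding poisson_binomial_tail_def by auto
qed

lemma poisson_binomial_tail_insert:
  assumes "finite I" "a \<notin> I"
  shows "poisson_binomial_tail (insert a I) k p =
           (1 - p a) * poisson_binomial_tail I k p + p a * poisson_binomial_tail I (k - 1) p"
proof -
  let ?S = "\<lambda>k. {S. S \<subseteq> I \<and> k \<le> card S}"
  let ?f = "\<lambda>S. (\<Prod>i\<in>S. p i) * (\<Prod>i\<in>insert a I - S. 1 - p i)"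
  have card_insert: "card (insert a S) = Suc (card S)" if "S \<subseteq> I" for S
    using that assms by (meson card_insert_disjoint finite_subset subsetD)
  have split: "{S. S \<subseteq> insert a I \<and> k \<le> card S} = ?S k \<union> insert a ` ?S (k - 1)"
  proof (intro equalityI subsetI)
    fix S assume S: "S \<in> {S. S \<subseteq> insert a I \<and> k \<le> card S}"
    show "S \<in> ?S k \<union> insert a ` ?S (k - 1)"
    proof (cases "a \<in> S")
      case True
      then have "S = insert a (S - {a})" "S - {a} \<subseteq> I" using S by auto
      with card_insert[of "S - {a}"] S show ?thesis
        by (intro UnI2 image_eqI[of _ _ "S - {a}"]) auto
    qed (use S in auto)
  qed (use card_insert in auto)
  have finite_S: "finite (?S k)" "finite (?S (k - 1))"
    using assms(1) by (auto intro: finite_subset[of _ "Pow I"])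
  have inj: "inj_on (insert a) (?S (k - 1))"
    using assms(2) unfolding inj_on_def by (metis insert_ident mem_Collect_eq subsetD)
  have "poisson_binomial_tail (insert a I) k p = sum ?f (?S k) + sum ?f (insert a ` ?S (k - 1))"
    unfolding poisson_binomial_tail_def split
    using assms(2) finite_S by (intro sum.union_disjoint finite_imageI) auto
  also have "sum ?f (insert a ` ?S (k - 1)) = sum (?f \<circ> insert a) (?S (k - 1))"
    by (rule sum.reindex[OF inj])
  also have "sum ?f (?S k) = (1 - p a) * poisson_binomial_tail I k p"
    unfolding poisson_binomial_tail_def sum_distrib_left
    using assms by (intro sum.cong refl) (auto simp: insert_Diff_if dest: subsetD)
  also have "sum (?f \<circ> insert a) (?S (k - 1)) = p a * poisson_binomial_tail I (k - 1) p"
    unfolding poisson_binomial_tail_def sum_distrib_left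
  proof (intro sum.cong refl)
    fix S assume "S \<in> ?S (k - 1)"
    then have "finite S" "a \<notin> S" "insert a I - insert a S = I - S" using assms finite_subset by auto
    then show "(?f \<circ> insert a) S = p a * ((\<Prod>i\<in>S. p i) * (\<Prod>i\<in>I - S. 1 - p i))" by simp
  qed
  finally show ?thesis .
qed

text \<open>
  In the induction, a new trial \<open>a\<close> is absorbed because the odds hypothesis is equivalent to
  \<open>p\<^sub>a (1 - (1 - e) u\<^sub>a) \<le> e u\<^sub>a\<close>.
\<close>

lemma poisson_binomial_tail_mult_prod_le:
  fixes p u :: "nat \<Rightarrow> real" and e :: real
  assumes "finite I" and e: "0 < e" "e \<le> 1"
    and pu: "\<And>i. i \<in> I \<Longrightarrow> 0 \<le> p i \<and> p i \<le> 1 \<and> 0 \<le> u i \<and> u i \<le> 1 \<and>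
                             p i * (1 - u i) \<le> e * u i * (1 - p i)"
  shows "poisson_binomial_tail I k p * (\<Prod>i\<in>I. 1 - (1 - e) * u i) \<le> e ^ k"
  using assms(1) pu
proof (induction I arbitrary: k rule: finite_induct)
  case empty
  then show ?case using e by (simp add: poisson_binomial_tail_empty)
next
  case (insert a I)
  let ?G = "\<lambda>k. poisson_binomial_tail I k p"
  define Q where "Q = (\<Prod>i\<in>I. 1 - (1 - e) * u i)"
  have a: "0 \<le> p a" "p a \<le> 1" "0 \<le> u a" "u a \<le> 1" "p a * (1 - u a) \<le> e * u a * (1 - p a)"
    using insert.prems by auto
  have p01: "\<And>i. i \<in> I \<Longrightarrow> 0 \<le> p i \<and> p i \<le> 1" using insert.prems by auto
  have "0 \<le> (1 - u i) + e * u i" if "i \<in> I" for i using insert.prems[of i] that e by auto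
  then have Q_nonneg: "0 \<le> Q" unfolding Q_def by (intro prod_nonneg) (simp add: algebra_simps)
  have IH: "?G k * Q \<le> e ^ k" "?G (k - 1) * Q \<le> e ^ (k - 1)"
    unfolding Q_def using insert.IH insert.prems by auto
  have gap: "0 \<le> ?G (k - 1) * Q - ?G k * Q"
    using poisson_binomial_tail_antimono[OF insert.hyps(1) p01, where k' = "k - 1" and k = k] Q_nonneg
    by (simp add: mult_right_mono)
  have pa: "p a * (1 - (1 - e) * u a) \<le> e * u a" using a(5) by (simp add: algebra_simps)
  have "poisson_binomial_tail (insert a I) k p * (\<Prod>i\<in>insert a I. 1 - (1 - e) * u i)
      = (1 - (1 - e) * u a) * (?G k * Q) + (p a * (1 - (1 - e) * u a)) * (?G (k - 1) * Q - ?G k * Q)"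
    using insert.hyps by (simp add: poisson_binomial_tail_insert Q_def algebra_simps)
  also have "\<dots> \<le> (1 - (1 - e) * u a) * (?G k * Q) + (e * u a) * (?G (k - 1) * Q - ?G k * Q)"
    using pa gap by (intro add_left_mono mult_right_mono)
  also have "\<dots> = (1 - u a) * (?G k * Q) + e * u a * (?G (k - 1) * Q)"
    by (simp add: algebra_simps)
  also have "\<dots> \<le> (1 - u a) * e ^ k + e * u a * e ^ (k - 1)"
    using IH a e by (intro add_mono mult_left_mono) auto
  also have "\<dots> \<le> e ^ k"
    using a e by (cases k) (auto simp: algebra_simps mult_left_le_one_le)
  finally show ?case .
qed

lemma poisson_binomial_tail_le_inverse_sqrt:
  fixes p u :: "nat \<Rightarrow> real" and c :: real
  assumes "finite I" and c: "1 \<le> c"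
    and pu: "\<And>i. i \<in> I \<Longrightarrow> 0 \<le> p i \<and> p i \<le> 1 \<and> 0 \<le> u i \<and> u i \<le> 1 \<and>
                             c * p i * (1 - u i) \<le> u i * (1 - p i)"
    and mean: "(\<Sum>i\<in>I. u i) \<le> real k - 1/2"
  shows "poisson_binomial_tail I k p \<le> 1 / sqrt c"
proof -
  define e where "e = 1 / c"
  have e: "0 < e" "e \<le> 1" using c by (auto simp: e_def)
  have pu': "p i * (1 - u i) \<le> e * u i * (1 - p i)" if "i \<in> I" for i
    using pu[OF that] c by (simp add: e_def field_simps mult.assoc)
  have convex: "e powr u i \<le> 1 - (1 - e) * u i" if "i \<in> I" for i
  proof -
    have u: "0 \<le> u i" "u i \<le> 1" using pu that by auto
    have "exp (1 * ((1 - u i) *\<^sub>R 0 + u i *\<^sub>R ln e)) \<le> (1 - u i) * exp (1 * 0) + u i * exp (1 * ln e)"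
      using convex_onD[OF convex_on_exp[of 1], of "u i" 0 "ln e"] u by simp
    then show ?thesis using e u by (simp add: powr_def algebra_simps)
  qed
  have "e powr (real k - 1/2) \<le> e powr (\<Sum>i\<in>I. u i)"
    using mean e by (intro powr_mono') auto
  also have "\<dots> = (\<Prod>i\<in>I. e powr u i)" using e by (simp add: powr_sum)
  also have "\<dots> \<le> (\<Prod>i\<in>I. 1 - (1 - e) * u i)"
    using convex by (intro prod_mono) auto
  finally have "poisson_binomial_tail I k p * e powr (real k - 1/2)
      \<le> poisson_binomial_tail I k p * (\<Prod>i\<in>I. 1 - (1 - e) * u i)"
    using pu by (intro mult_left_mono poisson_binomial_tail_nonneg[OF assms(1)]) auto
  also have "\<dots> \<le> e ^ k"
    using pu pu' by (intro poisson_binomial_tail_mult_prod_le[OF assms(1) e]) auto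
  also have "\<dots> = e powr (1/2) * e powr (real k - 1/2)"
    using e by (simp add: powr_add[symmetric] powr_realpow)
  finally have "poisson_binomial_tail I k p \<le> e powr (1/2)"
    using e by simp
  then show ?thesis using e by (simp add: e_def powr_half_sqrt real_sqrt_divide)
qed

lemma (in prob_space) prob_indep_pattern:
  assumes indep: "indep_vars (\<lambda>_. borel) X I" and "finite I"
    and A: "\<And>i. i \<in> I \<Longrightarrow> A i \<in> sets borel" and "S \<subseteq> I"
  shows "prob {\<omega>\<in>space M. {i\<in>I. X i \<omega> \<in> A i} = S} =
           (\<Prod>i\<in>S. prob {\<omega>\<in>space M. X i \<omega> \<in> A i}) * (\<Prod>i\<in>I - S. 1 - prob {\<omega>\<in>space M. X i \<omega> \<in> A i})"
proof (cases "I = {}")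
  case True
  then show ?thesis using \<open>S \<subseteq> I\<close> by (simp add: prob_space)
next
  case False
  define B where "B i = (if i \<in> S then A i else - A i)" for i
  have rv: "\<And>i. i \<in> I \<Longrightarrow> X i \<in> borel_measurable M" using indep unfolding indep_vars_def2 by auto
  have event: "{\<omega>\<in>space M. X i \<omega> \<in> A i} \<in> events" if "i \<in> I" for i
    using rv[OF that] A[OF that] by measurable
  have B: "B i \<in> sets borel" if "i \<in> I" for i using A[OF that] by (simp add: B_def)
  have "{\<omega>\<in>space M. {i\<in>I. X i \<omega> \<in> A i} = S} = (\<Inter>i\<in>I. X i -` B i \<inter> space M)"
    using False \<open>S \<subseteq> I\<close> by (auto simp: B_def split: if_splits)
  also have "prob \<dots> = (\<Prod>i\<in>I. prob (X i -` B i \<inter> space M))"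
  proof (rule indep_setsD)
    show "indep_sets (\<lambda>i. {X i -` B \<inter> space M | B. B \<in> sets borel}) I"
      using indep unfolding indep_vars_def2 by auto
    show "\<forall>i\<in>I. X i -` B i \<inter> space M \<in> {X i -` B \<inter> space M | B. B \<in> sets borel}"
      using B by blast
  qed (use False \<open>finite I\<close> in auto)
  also have "\<dots> = (\<Prod>i\<in>S. prob (X i -` B i \<inter> space M)) * (\<Prod>i\<in>I - S. prob (X i -` B i \<inter> space M))"
    using prod.subset_diff[OF \<open>S \<subseteq> I\<close> \<open>finite I\<close>] by (simp add: mult.commute)
  also have "(\<Prod>i\<in>S. prob (X i -` B i \<inter> space M)) = (\<Prod>i\<in>S. prob {\<omega>\<in>space M. X i \<omega> \<in> A i})"
    by (intro prod.cong refl arg_cong[where f = prob]) (auto simp: B_def)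
  also have "(\<Prod>i\<in>I - S. prob (X i -` B i \<inter> space M)) = (\<Prod>i\<in>I - S. 1 - prob {\<omega>\<in>space M. X i \<omega> \<in> A i})"
  proof (intro prod.cong refl)
    fix i assume i: "i \<in> I - S"
    then have "X i -` B i \<inter> space M = space M - {\<omega>\<in>space M. X i \<omega> \<in> A i}" by (auto simp: B_def)
    then show "prob (X i -` B i \<inter> space M) = 1 - prob {\<omega>\<in>space M. X i \<omega> \<in> A i}"
      using prob_compl event i by simp
  qed
  finally show ?thesis .
qed

lemma (in prob_space)
  assumes indep: "indep_vars (\<lambda>_. borel) X I" and "finite I"
    and A: "\<And>i. i \<in> I \<Longrightarrow> A i \<in> sets borel"
  shows sets_at_least_count: "{\<omega>\<in>space M. k \<le> card {i\<in>I. X i \<omega> \<in> A i}} \<in> events"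
    and prob_at_least_count_indep: "prob {\<omega>\<in>space M. k \<le> card {i\<in>I. X i \<omega> \<in> A i}}
          = poisson_binomial_tail I k (\<lambda>i. prob {\<omega>\<in>space M. X i \<omega> \<in> A i})"
proof -
  define SS where "SS = {S. S \<subseteq> I \<and> k \<le> card S}"
  define E where "E S = {\<omega>\<in>space M. {i\<in>I. X i \<omega> \<in> A i} = S}" for S
  have rv: "\<And>i. i \<in> I \<Longrightarrow> X i \<in> borel_measurable M" using indep unfolding indep_vars_def2 by auto
  have "{\<omega>\<in>space M. {i\<in>I. X i \<omega> \<in> A i} = S} =
          {\<omega>\<in>space M. (\<forall>i\<in>I. X i \<omega> \<in> A i \<longleftrightarrow> i \<in> S) \<and> S \<subseteq> I}" for S
    by auto
  also have "\<dots> S \<in> events" for S using rv A \<open>finite I\<close> by measurable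
  finally have E_events: "E S \<in> events" for S unfolding E_def .
  have finite_SS: "finite SS" unfolding SS_def using \<open>finite I\<close> by (auto intro: finite_subset[of _ "Pow I"])
  have union: "{\<omega>\<in>space M. k \<le> card {i\<in>I. X i \<omega> \<in> A i}} = (\<Union>S\<in>SS. E S)"
    unfolding SS_def E_def by auto
  show "{\<omega>\<in>space M. k \<le> card {i\<in>I. X i \<omega> \<in> A i}} \<in> events"
    unfolding union using finite_SS E_events by auto
  have "prob (\<Union>S\<in>SS. E S) = (\<Sum>S\<in>SS. prob (E S))"
    using E_events by (intro finite_measure_finite_Union[OF finite_SS])
      (auto simp: disjoint_family_on_def E_def)
  also have "\<dots> = poisson_binomial_tail I k (\<lambda>i. prob {\<omega>\<in>space M. X i \<omega> \<in> A i})"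
    unfolding poisson_binomial_tail_def SS_def[symmetric] E_def
    using prob_indep_pattern[OF assms] by (intro sum.cong refl) (simp add: SS_def)
  finally show "prob {\<omega>\<in>space M. k \<le> card {i\<in>I. X i \<omega> \<in> A i}}
      = poisson_binomial_tail I k (\<lambda>i. prob {\<omega>\<in>space M. X i \<omega> \<in> A i})"
    unfolding union .
qed

section \<open>Order statistics\<close>

lemma kmin_in_image:
  assumes "1 \<le> k" "k \<le> n"
  shows "kmin n k a \<in> a ` {..<n}"
proof -
  have "sort (map a [0..<n]) ! (k - 1) \<in> set (sort (map a [0..<n]))"
    using assms by (intro nth_mem) simp
  then show ?thesis unfolding kmin_def by auto
qed

lemma sorted_nth_down_closed_iff:
  fixes xs :: "real list"
  assumes sorted: "sorted xs" and "k < length xs" and down: "\<And>x y. Q y \<Longrightarrow> x \<le> y \<Longrightarrow> Q x"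
  shows "Q (xs ! k) \<longleftrightarrow> k < card {i. i < length xs \<and> Q (xs ! i)}"
proof
  assume "Q (xs ! k)"
  then have "{..k} \<subseteq> {i. i < length xs \<and> Q (xs ! i)}"
    using assms sorted_nth_mono[OF sorted] by auto
  from card_mono[OF _ this] show "k < card {i. i < length xs \<and> Q (xs ! i)}" by simp
next
  assume less: "k < card {i. i < length xs \<and> Q (xs ! i)}"
  show "Q (xs ! k)"
  proof (rule ccontr)
    assume not_Q: "\<not> Q (xs ! k)"
    have "i < k" if "i < length xs" "Q (xs ! i)" for i
    proof (rule ccontr)
      assume "\<not> i < k"
      then have "xs ! k \<le> xs ! i" using sorted_nth_mono[OF sorted] that by simp
      with down that(2) not_Q show False by blast
    qed
    then have "{i. i < length xs \<and> Q (xs ! i)} \<subseteq> {..<k}" by auto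
    from card_mono[OF _ this] less show False by simp
  qed
qed

lemma kmin_down_closed_iff:
  fixes a :: "nat \<Rightarrow> real"
  assumes "1 \<le> k" "k \<le> n" and down: "\<And>x y. Q y \<Longrightarrow> x \<le> y \<Longrightarrow> Q x"
  shows "Q (kmin n k a) \<longleftrightarrow> k \<le> card {i. i < n \<and> Q (a i)}"
proof -
  define xs where "xs = sort (map a [0..<n])"
  have "card {i. i < n \<and> Q (a i)} = length (filter Q (map a [0..<n]))"
    by (simp add: filter_map length_filter_conv_card cong: conj_cong)
  also have "\<dots> = length (filter Q xs)"
    unfolding xs_def by (simp add: filter_sort)
  also have "\<dots> = card {i. i < length xs \<and> Q (xs ! i)}"
    by (rule length_filter_conv_card)
  finally have "card {i. i < n \<and> Q (a i)} = card {i. i < length xs \<and> Q (xs ! i)}" .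
  moreover have "Q (xs ! (k - 1)) \<longleftrightarrow> k - 1 < card {i. i < length xs \<and> Q (xs ! i)}"
    using assms unfolding xs_def by (intro sorted_nth_down_closed_iff) auto
  ultimately show ?thesis using assms(1) unfolding kmin_def xs_def by auto
qed

section \<open>Condition (C) and odds\<close>

lemma odds_mono: "0 \<le> a \<Longrightarrow> a \<le> b \<Longrightarrow> b \<le> 1 \<Longrightarrow> odds a \<le> odds b"
  unfolding odds_def by (auto simp: frac_le)

lemma condC_iterate:
  assumes "condC K F" "K > 0" "t > 0"
  shows "ereal (2 ^ j) * odds (F t) \<le> odds (F (K ^ j * t))"
proof (induction j)
  case (Suc j)
  have "ereal (2 ^ Suc j) * odds (F t) = 2 * (ereal (2 ^ j) * odds (F t))"
    by (metis times_ereal.simps(1) mult.assoc power_Suc numeral_eq_ereal)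
  also have "\<dots> \<le> 2 * odds (F (K ^ j * t))"
    using Suc.IH by (intro ereal_mult_left_mono) auto
  also have "\<dots> \<le> odds (F (K * (K ^ j * t)))"
    using assms unfolding condC_def by auto
  finally show ?case by (simp add: mult.assoc)
qed simp

lemma cross_le_of_odds_le:
  assumes "c > 0" "0 \<le> p" "p \<le> 1" "0 \<le> u" "u \<le> 1" and odds: "ereal c * odds u \<le> odds p"
  shows "c * u * (1 - p) \<le> p * (1 - u)"
proof (cases "u = 1 \<or> p = 1")
  case True
  with assms show ?thesis by (auto simp: odds_def split: if_splits)
next
  case False
  then have "u < 1" "p < 1" using assms by auto
  with odds have "c * u / (1 - u) \<le> p / (1 - p)" by (simp add: odds_def)
  with \<open>u < 1\<close> \<open>p < 1\<close> show ?thesis by (simp add: field_simps)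
qed

text \<open>
  Condition (C) says nothing at \<open>t = 0\<close>; this rules out an atom at \<open>0\<close> of mass strictly
  between \<open>0\<close> and \<open>1\<close>, which matters when the quantile \<open>q\<close> is \<open>0\<close>.
\<close>

lemma condC_eq_1_right_of_atom:
  assumes C: "condC K F" and K: "K > 1" and mono: "mono F" and F01: "\<And>x. 0 \<le> F x \<and> F x \<le> 1"
    and atom: "0 < F 0" and x: "x > 0"
  shows "F x = 1"
proof (rule ccontr)
  assume "F x \<noteq> 1"
  then have x1: "F x < 1" using F01[of x] by simp
  show False
  proof (cases "F 0 = 1")
    case True
    with monoD[OF mono, of 0 x] x have "F 0 \<le> F x" by simp
    with True x1 show False by simp
  next
    case False
    define c where "c = F 0 / (1 - F 0)"
    have c: "c > 0" using atom False F01[of 0] by (simp add: c_def)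
    obtain j :: nat where "F x / (1 - F x) / c < 2 ^ j" using real_arch_pow[of 2] by auto
    then have j: "F x / (1 - F x) < 2 ^ j * c" using pos_divide_less_eq[OF c] by blast
    have Kj: "K ^ j > 0" using K by simp
    have "odds (F 0) \<le> odds (F (x / K ^ j))"
      using F01 mono x Kj by (intro odds_mono) (auto simp: monoD)
    then have "ereal (2 ^ j) * odds (F 0) \<le> ereal (2 ^ j) * odds (F (x / K ^ j))"
      by (intro ereal_mult_left_mono) auto
    also have "\<dots> \<le> odds (F (K ^ j * (x / K ^ j)))"
      using condC_iterate[OF C, of "x / K ^ j" j] K x by simp
    also have "K ^ j * (x / K ^ j) = x" using K by simp
    finally have "2 ^ j * c \<le> F x / (1 - F x)"
      using False x1 Kj unfolding odds_def c_def by auto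
    with j show False by simp
  qed
qed

lemma (in prob_space) condC_cdf_zero_or_one:
  fixes Z :: "'a \<Rightarrow> real"
  assumes K: "K > 1" and Z: "Z \<in> borel_measurable M"
    and C: "condC K (\<lambda>x. prob {\<omega>\<in>space M. Z \<omega> \<le> x})"
  shows "prob {\<omega>\<in>space M. Z \<omega> \<le> 0} = 0 \<or> prob {\<omega>\<in>space M. Z \<omega> \<le> 0} = 1"
proof (rule disjCI)
  assume "prob {\<omega>\<in>space M. Z \<omega> \<le> 0} \<noteq> 1"
  show "prob {\<omega>\<in>space M. Z \<omega> \<le> 0} = 0"
  proof (rule ccontr)
  assume "prob {\<omega>\<in>space M. Z \<omega> \<le> 0} \<noteq> 0"
  then have atom: "0 < prob {\<omega>\<in>space M. Z \<omega> \<le> 0}" by (simp add: zero_less_measure_iff)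
  have events: "{\<omega>\<in>space M. Z \<omega> \<le> x} \<in> events" for x using Z by measurable
  have "mono (\<lambda>x. prob {\<omega>\<in>space M. Z \<omega> \<le> x})"
    by (intro monoI finite_measure_mono events) auto
  with condC_eq_1_right_of_atom[OF C K _ _ atom]
  have "AE \<omega> in M. Z \<omega> \<le> inverse (real (Suc m))" for m
    using prob_Collect_eq_1[OF events] by simp
  then have "AE \<omega> in M. \<forall>m. Z \<omega> \<le> inverse (real (Suc m))" by (simp add: AE_all_countable)
  then have "AE \<omega> in M. Z \<omega> \<le> 0"
    by (rule AE_mp, intro AE_I2 impI) (meson not_le reals_Archimedean)
  then show False using prob_Collect_eq_1[OF events] \<open>prob {\<omega>\<in>space M. Z \<omega> \<le> 0} \<noteq> 1\<close> by simp
  qed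
qed

lemma ex_nat_less_le_add_one:
  fixes x :: real
  assumes "0 < x"
  obtains j :: nat where "real j < x" "x \<le> real j + 1"
proof
  show "real (nat \<lceil>x\<rceil> - 1) < x" "x \<le> real (nat \<lceil>x\<rceil> - 1) + 1"
    using assms by (simp_all add: of_nat_diff) linarith+
qed

lemma inverse_sqrt_two_power_le:
  fixes L a :: real
  assumes "L \<le> real j + 1" "4 \<le> a"
  shows "1 / sqrt (2 ^ j) \<le> 4 * exp (- L / a)"
proof -
  have sqrt: "sqrt (2 ^ j) = exp (real j * ln 2 / 2)"
    by (simp add: powr_half_sqrt[symmetric] powr_def ln_realpow)
  have "2 * ln 2 = ln (4 :: real)" using ln_realpow[of 2 2] by simp
  then have four: "exp (2 * ln 2) = (4 :: real)" by simp
  have "1 / sqrt (2 ^ j) = exp (- (real j * ln 2) / 2)"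
    unfolding sqrt by (simp add: exp_minus field_simps)
  also have "\<dots> \<le> exp (2 * ln 2 - L / a)"
  proof -
    have ln2: "real j * (2/3) \<le> real j * ln 2"
      using ln2_ge_two_thirds by (intro mult_left_mono) simp_all
    have "L / a \<le> (real j + 1) / a" using assms by (simp add: divide_right_mono)
    also have "\<dots> \<le> (real j + 1) / 4" using assms by (intro divide_left_mono) auto
    also have "\<dots> = real j / 4 + 1 / 4" by (rule add_divide_distrib)
    finally have "- (real j * ln 2) / 2 \<le> 2 * ln 2 - L / a"
      using ln2 ln2_ge_two_thirds by linarith
    then show ?thesis by (simp only: exp_le_cancel_iff)
  qed
  also have "\<dots> = 4 * exp (- L / a)" by (simp add: exp_diff four exp_minus divide_inverse)
  finally show ?thesis .
qed
lemma four_exp_neg_less_half: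
  fixes x :: real
  assumes "13/6 \<le> x"
  shows "4 * exp (- x) < 1/2"
proof -
  have e: "2.7 \<le> exp (1 :: real)" using e_approx_32 by (simp add: abs_if split: if_splits)
  have "(2.7 * 2.7) * (7/6) \<le> (exp 1 * exp 1) * exp (1/6 :: real)"
    using e exp_ge_add_one_self[of "1/6 :: real"] by (intro mult_mono) auto
  also have "\<dots> = exp (13/6)" by (simp flip: exp_add)
  also have "\<dots> \<le> exp x" using assms by simp
  finally have "8 < exp x" by simp
  then show ?thesis by (simp add: exp_minus inverse_eq_divide divide_less_eq)
qed

section \<open>Tails of the \<open>k\<close>-th smallest of independent variables under condition (C)\<close>

locale kmin_condC = prob_space +
  fixes X :: "nat \<Rightarrow> 'a \<Rightarrow> real" and K q :: real and n k :: nat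
  assumes K_gt_1: "K > 1"
    and k_ge_1: "1 \<le> k" and k_le_n: "k \<le> n"
    and indep: "indep_vars (\<lambda>_. borel) X {..<n}"
    and nonneg: "\<forall>i<n. \<forall>\<omega>\<in>space M. X i \<omega> \<ge> 0"
    and condC: "\<forall>i<n. condC K (\<lambda>x. prob {\<omega>\<in>space M. X i \<omega> \<le> x})"
    and quantile: "is_quantile (\<lambda>x. (\<Sum>i<n. prob {\<omega>\<in>space M. X i \<omega> \<le> x}) / real n)
                     ((real k - 1/2) / real n) q"
begin

abbreviation F :: "nat \<Rightarrow> real \<Rightarrow> real" where
  "F i x \<equiv> prob {\<omega>\<in>space M. X i \<omega> \<le> x}"

abbreviation kth_min :: "'a \<Rightarrow> real" where
  "kth_min \<omega> \<equiv> kmin n k (\<lambda>i. X i \<omega>)"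

lemma X_measurable: "i < n \<Longrightarrow> X i \<in> borel_measurable M"
  using indep unfolding indep_vars_def2 by auto

lemma events_X_le: "i < n \<Longrightarrow> {\<omega>\<in>space M. X i \<omega> \<le> x} \<in> events"
  using X_measurable by measurable

lemma F_mono: "i < n \<Longrightarrow> x \<le> y \<Longrightarrow> F i x \<le> F i y"
  by (intro finite_measure_mono events_X_le) auto

lemma sum_F_below_quantile: "s < q \<Longrightarrow> (\<Sum>i<n. F i s) \<le> real k - 1/2"
  using quantile k_le_n k_ge_1 unfolding is_quantile_def by (auto simp: divide_le_cancel)

lemma sum_F_at_quantile: "real k - 1/2 \<le> (\<Sum>i<n. F i q)"
  using quantile k_le_n k_ge_1 unfolding is_quantile_def by (auto simp: divide_le_cancel)

lemma quantile_nonneg: "0 \<le> q"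
proof (rule ccontr)
  assume "\<not> 0 \<le> q"
  then have "{\<omega>\<in>space M. X i \<omega> \<le> q} = {}" if "i < n" for i using nonneg that by force
  then have "(\<Sum>i<n. F i q) = 0" by (intro sum.neutral) (simp del: Collect_empty_eq)
  with sum_F_at_quantile k_ge_1 show False by simp
qed

lemma kth_min_nonneg: "\<omega> \<in> space M \<Longrightarrow> 0 \<le> kth_min \<omega>"
  using kmin_in_image[OF k_ge_1 k_le_n, of "\<lambda>i. X i \<omega>"] nonneg by auto

lemma F_cross_ratio:
  assumes "i < n" "0 \<le> a" "K ^ j * a \<le> b"
  shows "2 ^ j * F i a * (1 - F i b) \<le> F i b * (1 - F i a)"
proof (cases "a = 0")
  case True
  then have "F i 0 \<le> F i b" using assms K_gt_1 by (intro F_mono) auto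
  moreover have "F i 0 = 0 \<or> F i 0 = 1"
    using condC_cdf_zero_or_one[OF K_gt_1 X_measurable] condC assms by auto
  ultimately have "F i 0 = 0 \<or> F i b = 1" by (metis antisym prob_le_1)
  then show ?thesis using True prob_le_1[of "{\<omega>\<in>space M. X i \<omega> \<le> 0}"] by auto
next
  case False
  then have "0 < a" using assms by simp
  have "ereal (2 ^ j) * odds (F i a) \<le> odds (F i (K ^ j * a))"
    by (rule condC_iterate) (use condC assms \<open>0 < a\<close> K_gt_1 in auto)
  also have "\<dots> \<le> odds (F i b)"
    using F_mono[OF \<open>i < n\<close> \<open>K ^ j * a \<le> b\<close>] by (intro odds_mono) auto
  finally show ?thesis by (intro cross_le_of_odds_le) auto
qed

lemma kth_min_le_iff: "kth_min \<omega> \<le> x \<longleftrightarrow> k \<le> card {i\<in>{..<n}. X i \<omega> \<in> {..x}}"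
  using kmin_down_closed_iff[OF k_ge_1 k_le_n, of "\<lambda>y. y \<le> x"] by auto

lemma kth_min_less_iff: "kth_min \<omega> < x \<longleftrightarrow> k \<le> card {i\<in>{..<n}. X i \<omega> \<in> {..<x}}"
  using kmin_down_closed_iff[OF k_ge_1 k_le_n, of "\<lambda>y. y < x"] by auto

lemma kth_min_greater_iff: "x < kth_min \<omega> \<longleftrightarrow> n - k + 1 \<le> card {i\<in>{..<n}. X i \<omega> \<in> {x<..}}"
proof -
  have "{i\<in>{..<n}. X i \<omega> \<in> {x<..}} = {..<n} - {i. i < n \<and> X i \<omega> \<le> x}" by auto
  then have "card {i\<in>{..<n}. X i \<omega> \<in> {x<..}} = n - card {i. i < n \<and> X i \<omega> \<le> x}"
    by (simp add: card_Diff_subset subset_eq)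
  moreover have "card {i. i < n \<and> X i \<omega> \<le> x} \<le> n"
    using card_mono[of "{..<n}" "{i. i < n \<and> X i \<omega> \<le> x}"] by auto
  moreover have "kth_min \<omega> \<le> x \<longleftrightarrow> k \<le> card {i. i < n \<and> X i \<omega> \<le> x}"
    using kmin_down_closed_iff[OF k_ge_1 k_le_n, of "\<lambda>y. y \<le> x" "\<lambda>i. X i \<omega>"] by simp
  ultimately show ?thesis using k_le_n by (auto simp: not_le[symmetric])
qed

lemma events_kth_min: "{\<omega>\<in>space M. kth_min \<omega> \<le> x} \<in> events" "{\<omega>\<in>space M. kth_min \<omega> < x} \<in> events"
  unfolding kth_min_le_iff kth_min_less_iff by (intro sets_at_least_count[OF indep]; simp)+

lemma prob_kth_min_le: "prob {\<omega>\<in>space M. kth_min \<omega> \<le> x} = poisson_binomial_tail {..<n} k (\<lambda>i. F i x)"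
  unfolding kth_min_le_iff by (subst prob_at_least_count_indep[OF indep]) simp_all

lemma prob_kth_min_greater:
  "prob {\<omega>\<in>space M. x < kth_min \<omega>} = poisson_binomial_tail {..<n} (n - k + 1) (\<lambda>i. 1 - F i x)"
proof -
  have "prob {\<omega>\<in>space M. X i \<omega> \<in> {x<..}} = 1 - F i x" if "i < n" for i
  proof -
    have "{\<omega>\<in>space M. X i \<omega> \<in> {x<..}} = space M - {\<omega>\<in>space M. X i \<omega> \<le> x}" by auto
    then show ?thesis using prob_compl[OF events_X_le[OF that]] by simp
  qed
  then show ?thesis
    unfolding kth_min_greater_iff
    by (subst prob_at_least_count_indep[OF indep]) (auto intro: poisson_binomial_tail_cong)
qed

lemma lower_tail:
  assumes "0 < t" "t < 1"
  shows "prob {\<omega>\<in>space M. kth_min \<omega> < t * q} \<le> 4 * t powr (1 / (4 * ln K))"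
proof (cases "q = 0")
  case True
  then have "{\<omega>\<in>space M. kth_min \<omega> < t * q} = {}" using kth_min_nonneg by force
  then have "prob {\<omega>\<in>space M. kth_min \<omega> < t * q} = 0" by (simp only: measure_empty)
  then show ?thesis by simp
next
  case False
  then have q: "0 < q" using quantile_nonneg by simp
  define L where "L = - ln t / ln K"
  have "0 < L" using assms K_gt_1 by (simp add: L_def divide_neg_pos)
  then obtain j where j: "real j < L" "L \<le> real j + 1" by (rule ex_nat_less_le_add_one)
  have "ln (K ^ j * t) = real j * ln K + ln t" using K_gt_1 assms by (simp add: ln_mult ln_realpow)
  also have "\<dots> < 0" using j K_gt_1 by (simp add: L_def field_simps)
  finally have "K ^ j * t < 1" using K_gt_1 assms by (simp add: ln_less_zero_iff)
  then have below: "K ^ j * (t * q) < q" using q by (simp add: mult.assoc[symmetric])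
  have "prob {\<omega>\<in>space M. kth_min \<omega> < t * q} \<le> prob {\<omega>\<in>space M. kth_min \<omega> \<le> t * q}"
    by (intro finite_measure_mono events_kth_min) auto
  also have "\<dots> = poisson_binomial_tail {..<n} k (\<lambda>i. F i (t * q))" by (rule prob_kth_min_le)
  also have "\<dots> \<le> 1 / sqrt (2 ^ j)"
  proof (rule poisson_binomial_tail_le_inverse_sqrt[OF _ _ _ sum_F_below_quantile[OF below]])
    fix i assume "i \<in> {..<n}"
    then have "2 ^ j * F i (t * q) * (1 - F i (K ^ j * (t * q))) \<le> F i (K ^ j * (t * q)) * (1 - F i (t * q))"
      using assms q by (intro F_cross_ratio) auto
    then show "0 \<le> F i (t * q) \<and> F i (t * q) \<le> 1 \<and> 0 \<le> F i (K ^ j * (t * q)) \<and>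
               F i (K ^ j * (t * q)) \<le> 1 \<and>
               2 ^ j * F i (t * q) * (1 - F i (K ^ j * (t * q))) \<le> F i (K ^ j * (t * q)) * (1 - F i (t * q))"
      by simp
  qed simp_all
  also have "\<dots> \<le> 4 * exp (- L / 4)" using j by (intro inverse_sqrt_two_power_le) auto
  also have "exp (- L / 4) = t powr (1 / (4 * ln K))" using assms by (simp add: L_def powr_def)
  finally show ?thesis .
qed

lemma upper_tail:
  assumes "1 < t"
  shows "prob {\<omega>\<in>space M. kth_min \<omega> > t * q} \<le> 4 * t powr (- 1 / (6 * ln K))"
proof -
  define L where "L = ln t / ln K"
  have "0 < L" using assms K_gt_1 by (simp add: L_def)
  then obtain j where j: "real j < L" "L \<le> real j + 1" by (rule ex_nat_less_le_add_one)
  have "ln (K ^ j) < ln t" using j K_gt_1 by (simp add: L_def ln_realpow field_simps)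
  then have scaled: "K ^ j * q \<le> t * q" using K_gt_1 assms quantile_nonneg by (intro mult_right_mono) auto
  have cross: "2 ^ j * (1 - F i (t * q)) * (1 - (1 - F i q)) \<le> (1 - F i q) * (1 - (1 - F i (t * q)))"
    if "i < n" for i
    using F_cross_ratio[OF that quantile_nonneg scaled] by (simp add: algebra_simps)
  have "(\<Sum>i<n. 1 - F i q) = real n - (\<Sum>i<n. F i q)" by (simp add: sum_subtractf)
  also have "\<dots> \<le> real (n - k + 1) - 1/2" using sum_F_at_quantile k_le_n by (simp add: of_nat_diff)
  finally have mean: "(\<Sum>i<n. 1 - F i q) \<le> real (n - k + 1) - 1/2" .
  have "prob {\<omega>\<in>space M. kth_min \<omega> > t * q} = poisson_binomial_tail {..<n} (n - k + 1) (\<lambda>i. 1 - F i (t * q))"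
    by (rule prob_kth_min_greater)
  also have "\<dots> \<le> 1 / sqrt (2 ^ j)"
    using cross by (intro poisson_binomial_tail_le_inverse_sqrt[OF _ _ _ mean]) simp_all
  also have "\<dots> \<le> 4 * exp (- L / 6)" using j by (intro inverse_sqrt_two_power_le) auto
  also have "exp (- L / 6) = t powr (- 1 / (6 * ln K))" using assms by (simp add: L_def powr_def)
  finally show ?thesis .
qed

lemma median_lower_bound:
  assumes "is_median M kth_min m"
  shows "K powr (-10) * q \<le> m"
proof (rule ccontr)
  assume "\<not> K powr (-10) * q \<le> m"
  have K10: "0 < K powr (-10)" "K powr (-10) < 1" using K_gt_1 by (auto intro: powr_less_one)
  have "1/2 \<le> prob {\<omega>\<in>space M. kth_min \<omega> \<le> m}" using assms unfolding is_median_def by simp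
  also have "\<dots> \<le> prob {\<omega>\<in>space M. kth_min \<omega> < K powr (-10) * q}"
    using \<open>\<not> K powr (-10) * q \<le> m\<close> by (intro finite_measure_mono events_kth_min) auto
  also have "\<dots> \<le> 4 * (K powr (-10)) powr (1 / (4 * ln K))" using K10 by (rule lower_tail)
  also have "\<dots> = 4 * exp (- (5/2))" using K_gt_1 by (simp add: powr_powr powr_def)
  also have "\<dots> < 1/2" by (rule four_exp_neg_less_half) simp
  finally show False by simp
qed

lemma median_upper_bound:
  assumes "is_median M kth_min m"
  shows "m \<le> K powr 13 * q"
proof (rule ccontr)
  assume "\<not> m \<le> K powr 13 * q"
  have "1 - 4 * exp (- (13/6)) \<le> 1 - prob {\<omega>\<in>space M. kth_min \<omega> > K powr 13 * q}"
  proof -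
    have "prob {\<omega>\<in>space M. kth_min \<omega> > K powr 13 * q} \<le> 4 * (K powr 13) powr (- 1 / (6 * ln K))"
      using K_gt_1 by (intro upper_tail) simp
    also have "\<dots> = 4 * exp (- (13/6))" using K_gt_1 by (simp add: powr_powr powr_def)
    finally show ?thesis by simp
  qed
  also have "\<dots> = prob {\<omega>\<in>space M. kth_min \<omega> \<le> K powr 13 * q}"
  proof -
    have "{\<omega>\<in>space M. kth_min \<omega> > K powr 13 * q} = space M - {\<omega>\<in>space M. kth_min \<omega> \<le> K powr 13 * q}"
      by auto
    then show ?thesis using prob_compl[OF events_kth_min(1)] by simp
  qed
  also have "\<dots> \<le> prob {\<omega>\<in>space M. kth_min \<omega> < m}"
    using \<open>\<not> m \<le> K powr 13 * q\<close> by (intro finite_measure_mono events_kth_min) auto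
  also have "\<dots> \<le> 1/2" using assms unfolding is_median_def by simp
  finally show False using four_exp_neg_less_half[of "13/6"] by simp
qed

end

theorem theorem3p1:
  fixes P :: "'a measure" and X :: "nat \<Rightarrow> 'a \<Rightarrow> real" and K q :: real and n k :: nat
  assumes "prob_space P"
    and "K > 1"
    and "1 \<le> k" and "k \<le> n"
    and "prob_space.indep_vars P (\<lambda>_. borel) X {..<n}"
    and "\<forall>i<n. \<forall>\<omega>\<in>space P. X i \<omega> \<ge> 0"
    and "\<forall>i<n. condC K (\<lambda>x. measure P {\<omega>\<in>space P. X i \<omega> \<le> x})"
    and "is_quantile (\<lambda>x. (\<Sum>i<n. measure P {\<omega>\<in>space P. X i \<omega> \<le> x}) / real n)
                     ((real k - 1/2) / real n) q"
  shows "(\<forall>t. 0 < t \<and> t < K powr (-5) \<longrightarrow>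
            measure P {\<omega>\<in>space P. kmin n k (\<lambda>i. X i \<omega>) < t * q}
              \<le> 4 * t powr (1 / (4 * ln K)))
       \<and> (\<forall>t. t > K powr 5 \<longrightarrow>
            measure P {\<omega>\<in>space P. kmin n k (\<lambda>i. X i \<omega>) > t * q}
              \<le> 4 * t powr (- 1 / (6 * ln K)))
       \<and> (\<forall>m. is_median P (\<lambda>\<omega>. kmin n k (\<lambda>i. X i \<omega>)) m \<longrightarrow>
            K powr (-10) * q \<le> m \<and> m \<le> K powr 13 * q)"
proof -
  interpret kmin_condC P X K q n k
    using assms by (intro kmin_condC.intro kmin_condC_axioms.intro) auto
  have "K powr (-5) < 1" "1 < K powr 5" using assms(2) by (auto intro: powr_less_one)
  then show ?thesis
    using lower_tail upper_tail median_lower_bound median_upper_bound by force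
qed

end
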